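(* As sequences indexed by $n\geq1$, $\mathrm{orb}^\sigma=\mathrm{orb}^\sigma_1\ast\mathbf{1}$ and $\mathrm{orb}^\sigma_1=\mathrm{A113788}$; that is, for every $n\geq1$, $\mathrm{orb}^\sigma(n)=\sum_{d\mid n}\mathrm{orb}^\sigma_1(d)$ and $\mathrm{orb}^\sigma_1(n)=\frac1n\sum_{d\mid n}p(d)\,\mu(n/d)$.
   Context: For $n\geq1$ let $V_n=\{v_0,\dots,v_{n-1}\}$, indices modulo $n$, and let the cyclic group $\langle\sigma\rangle=\{1,\sigma,\dots,\sigma^{n-1}\}$ act on subsets of $V_n$ via $\sigma(v_i)=v_{i+1}$. Let $\mathbf{X}_n$ be the family of subsets $X\subseteq V_n$ such that (a) there is no $i\in\mathbb{Z}_n$ with $v_i,v_{i+1}\in X$, and (b) for every $i\in\mathbb{Z}_n$ at least one of $v_i,v_{i+1},v_{i+2}$ lies in $X$ (for $n\geq 3$: the maximal independent sets of the cycle graph $C_n$). $\mathrm{orb}^\sigma(n)$ is the number of $\langle\sigma\rangle$-orbits of $\mathbf{X}_n$ (unlabeled MISs), and for $d\mid n$, $\mathrm{orb}^\sigma_d(n)$ is the number of these orbits of cardinality $n/d$. Perrin: $p(1)=0,p(2)=2,p(3)=3$, $p(n)=p(n-2)+p(n-3)$ ($n\geq4$). Dirichlet convolution $(f\ast g)(n)=\sum_{d\mid n}f(d)g(n/d)$; $\mu$ Möbius function; $\mathbf{1}(n)=1$; $\mathrm{A113788}(n)=\frac1n(p\ast\mu)(n)$. *)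

theory Defs
  imports "HOL-Computational_Algebra.Computational_Algebra"
begin

text \<open>Vertices v_0..v_{n-1} are represented by the indices 0..n-1; indices are taken mod n.\<close>

definition sigma :: "nat \<Rightarrow> nat set \<Rightarrow> nat set" where
  "sigma n X = (\<lambda>i. (i + 1) mod n) ` X"

definition MIS :: "nat \<Rightarrow> nat set set" where
  "MIS n = {X. X \<subseteq> {..<n}
       \<and> \<not> (\<exists>i<n. i \<in> X \<and> (i + 1) mod n \<in> X)
       \<and> (\<forall>i<n. i \<in> X \<or> (i + 1) mod n \<in> X \<or> (i + 2) mod n \<in> X)}"

definition orbit_sigma :: "nat \<Rightarrow> nat set \<Rightarrow> nat set set" where
  "orbit_sigma n X = {(sigma n ^^ k) X | k. k < n}"

definition orb :: "nat \<Rightarrow> nat" where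
  "orb n = card (orbit_sigma n ` MIS n)"

definition orb_d :: "nat \<Rightarrow> nat \<Rightarrow> nat" where
  "orb_d d n = card {Orb \<in> orbit_sigma n ` MIS n. card Orb = n div d}"

fun perrin :: "nat \<Rightarrow> nat" where
  "perrin 0 = 3"
| "perrin (Suc 0) = 0"
| "perrin (Suc (Suc 0)) = 2"
| "perrin (Suc (Suc (Suc n))) = perrin (Suc n) + perrin n"

definition moebius_mu :: "nat \<Rightarrow> int" where
  "moebius_mu n = (if n = 0 then 0 else if squarefree n then (-1) ^ card (prime_factors n) else 0)"

end

theory Submission
  imports Defs "HOL-Combinatorics.Orbits"
begin

text \<open>Record a vertex set \<open>X\<close> of the \<open>n\<close>-cycle by its windows \<open>(v\<^sub>i \<in> X, v\<^sub>i\<^sub>+\<^sub>1 \<in> X)\<close>. The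
  maximal independent sets then become the closed walks of length \<open>n\<close> in a transfer graph on
  three states whose adjacency matrix \<open>A\<close> satisfies \<open>A\<^sup>3 = A + 1\<close>, so there are
  \<open>tr A\<^sup>n = p(n)\<close> of them. For \<open>d\<close> dividing \<open>n\<close>, a set fixed by \<open>\<sigma>\<^sup>d\<close> is the \<open>n/d\<close>-fold repetition
  of a maximal independent set of the \<open>d\<close>-cycle, so \<open>\<sigma>\<^sup>d\<close> has \<open>p(d)\<close> fixed points. Grouping them
  by orbit size gives \<open>p(d) = (\<Sum>e | e dvd d. N\<^sub>n(e))\<close>, where \<open>N\<^sub>n(e)\<close> counts the sets whose orbit
  has \<open>e\<close> elements. By Moebius inversion \<open>N\<^sub>n(d)\<close> does not depend on \<open>n\<close>; as it is \<open>d\<close> times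
  the number of orbits of size \<open>d\<close>, that number equals \<open>orb\<^sub>1(d)\<close>. Summing over the orbit sizes
  \<open>d dvd n\<close> gives the first identity, and \<open>d = n\<close> gives the second.\<close>

section \<open>Moebius inversion\<close>

lemma sum_Pow_minus_one_power_card:
  "finite P \<Longrightarrow> (\<Sum>T\<in>Pow P. (-1::int) ^ card T) = (if P = {} then 1 else 0)"
  using prod_diff_conv_sum[of P "\<lambda>_. 1::int" "\<lambda>_. 1"] by (simp add: power_0_left)

lemma prod_distinct_primes:
  fixes T :: "nat set"
  assumes "finite T" "\<And>p. p \<in> T \<Longrightarrow> prime p"
  shows "(\<Prod>p\<in>T. p) \<noteq> 0" "prime_factors (\<Prod>p\<in>T. p) = T" "squarefree (\<Prod>p\<in>T. p)"
proof -
  show "(\<Prod>p\<in>T. p) \<noteq> 0"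
    using assms(1) assms(2)[of 0] by auto
  have "prime_factors (\<Prod>p\<in>T. p) = \<Union>((prime_factors \<circ> (\<lambda>p. p)) ` T)"
    by (rule prime_factors_prod) (use assms(1) assms(2)[of 0] in auto)
  also have "\<dots> = T"
    using assms by (auto simp: prime_prime_factors)
  finally show "prime_factors (\<Prod>p\<in>T. p) = T" .
  show "squarefree (\<Prod>p\<in>T. p)"
    by (rule squarefree_prod_coprime) (use assms in \<open>auto simp: primes_coprime squarefree_prime\<close>)
qed

lemma squarefree_eq_prod_prime_factors:
  fixes d :: nat
  assumes "d \<noteq> 0" "squarefree d"
  shows "d = (\<Prod>p\<in>prime_factors d. p)"
proof -
  have "d = (\<Prod>p\<in>prime_factors d. p ^ multiplicity p d)"
    using prod_prime_factors[OF assms(1)] by simp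
  also have "\<dots> = (\<Prod>p\<in>prime_factors d. p)"
    using assms squarefree_factorial_semiring'[OF assms(1)] by (intro prod.cong) auto
  finally show ?thesis .
qed

lemma squarefree_divisors_eq_image_Pow:
  fixes m :: nat
  assumes "m > 0"
  shows "{d. d dvd m \<and> squarefree d} = (\<lambda>T. \<Prod>p\<in>T. p) ` Pow (prime_factors m)"
proof (intro equalityI subsetI)
  fix d assume "d \<in> {d. d dvd m \<and> squarefree d}"
  then have "d dvd m" "squarefree d" "d \<noteq> 0"
    using assms by auto
  moreover have "prime_factors d \<subseteq> prime_factors m"
    using \<open>d dvd m\<close> assms by (intro dvd_prime_factors) auto
  ultimately show "d \<in> (\<lambda>T. \<Prod>p\<in>T. p) ` Pow (prime_factors m)"
    using squarefree_eq_prod_prime_factors by blast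
next
  fix d assume "d \<in> (\<lambda>T. \<Prod>p\<in>T. p) ` Pow (prime_factors m)"
  then obtain T where T: "T \<subseteq> prime_factors m" "d = (\<Prod>p\<in>T. p)"
    by blast
  have "finite T" "\<And>p. p \<in> T \<Longrightarrow> prime p"
    using T(1) finite_subset by auto
  then have "squarefree d"
    using T(2) prod_distinct_primes(3) by blast
  have "(\<Prod>p\<in>T. p) dvd (\<Prod>p\<in>prime_factors m. p)"
    by (rule prod_dvd_prod_subset[OF _ T(1)]) simp
  also have "\<dots> dvd (\<Prod>p\<in>prime_factors m. p ^ multiplicity p m)"
    by (rule prod_dvd_prod) (simp add: prime_factors_multiplicity)
  also have "\<dots> = m"
    using prod_prime_factors[of m] assms by simp
  finally show "d \<in> {d. d dvd m \<and> squarefree d}"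
    using T(2) \<open>squarefree d\<close> by simp
qed

lemma sum_moebius_mu_dvd:
  fixes m :: nat
  assumes "m > 0"
  shows "(\<Sum>d | d dvd m. moebius_mu d) = (if m = 1 then 1 else 0)"
proof -
  let ?P = "prime_factors m"
  have primes: "finite T" "\<And>p. p \<in> T \<Longrightarrow> prime p" if "T \<in> Pow ?P" for T
    using that finite_subset by auto
  have "(\<Sum>d | d dvd m. moebius_mu d) = (\<Sum>d | d dvd m \<and> squarefree d. moebius_mu d)"
    using assms by (intro sum.mono_neutral_right) (auto simp: moebius_mu_def)
  also have "\<dots> = (\<Sum>T\<in>Pow ?P. moebius_mu (\<Prod>p\<in>T. p))"
  proof (unfold squarefree_divisors_eq_image_Pow[OF assms], rule sum.reindex[unfolded comp_def])
    show "inj_on (\<lambda>T. \<Prod>p\<in>T. p) (Pow ?P)"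
      using primes prod_distinct_primes(2) by (metis inj_onI)
  qed
  also have "\<dots> = (\<Sum>T\<in>Pow ?P. (-1) ^ card T)"
    using primes prod_distinct_primes by (intro sum.cong) (simp_all add: moebius_mu_def)
  also have "\<dots> = (if m = 1 then 1 else 0)"
    using assms by (simp add: sum_Pow_minus_one_power_card prime_factorization_empty_iff)
  finally show ?thesis .
qed

lemma divisors_div_eq:
  fixes n k :: nat
  assumes "n > 0" "k dvd n"
  shows "{e. e dvd n div k} = {e. e dvd n \<and> e * k dvd n}"
proof -
  have "k \<noteq> 0"
    using assms by auto
  then show ?thesis
    using assms by (auto simp: dvd_div_iff_mult intro: dvd_mult_left)
qed

lemma sum_divisors_div_swap:
  fixes n :: nat and h :: "nat \<Rightarrow> nat \<Rightarrow> 'a::comm_monoid_add"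
  assumes "n > 0"
  shows "(\<Sum>k | k dvd n. \<Sum>e | e dvd n div k. h k e) = (\<Sum>e | e dvd n. \<Sum>k | k dvd n div e. h k e)"
proof -
  let ?D = "{d. d dvd n}"
  have "(\<Sum>k\<in>?D. \<Sum>e | e dvd n div k. h k e) = (\<Sum>k\<in>?D. \<Sum>e\<in>{e \<in> ?D. e * k dvd n}. h k e)"
    using divisors_div_eq[OF assms] by (intro sum.cong) simp_all
  also have "\<dots> = (\<Sum>e\<in>?D. \<Sum>k\<in>{k \<in> ?D. e * k dvd n}. h k e)"
    using assms by (intro sum.swap_restrict) auto
  also have "\<dots> = (\<Sum>e\<in>?D. \<Sum>k | k dvd n div e. h k e)"
    using divisors_div_eq[OF assms] by (intro sum.cong) (simp_all add: mult.commute)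
  finally show ?thesis .
qed

lemma moebius_inversion:
  fixes f g :: "nat \<Rightarrow> 'a::comm_ring_1"
  assumes "n > 0" and f: "\<And>m. m dvd n \<Longrightarrow> f m = (\<Sum>d | d dvd m. g d)"
  shows "g n = (\<Sum>d | d dvd n. f d * of_int (moebius_mu (n div d)))"
proof -
  let ?\<mu> = "\<lambda>k. of_int (moebius_mu k) :: 'a"
  have "(\<Sum>d | d dvd n. f d * ?\<mu> (n div d)) = (\<Sum>k | k dvd n. ?\<mu> k * f (n div k))"
    using assms(1)
    by (intro sum.reindex_bij_witness[of _ "\<lambda>k. n div k" "\<lambda>k. n div k"])
      (auto simp: dvd_div_eq_mult div_div_eq_right dvd_div_iff_mult mult.commute)
  also have "\<dots> = (\<Sum>k | k dvd n. \<Sum>e | e dvd n div k. ?\<mu> k * g e)"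
  proof (intro sum.cong refl)
    fix k assume "k \<in> {k. k dvd n}"
    then have "n div k dvd n"
      by (metis dvd_div_mult_self dvd_triv_left mem_Collect_eq)
    then show "?\<mu> k * f (n div k) = (\<Sum>e | e dvd n div k. ?\<mu> k * g e)"
      by (simp add: f sum_distrib_left)
  qed
  also have "\<dots> = (\<Sum>e | e dvd n. \<Sum>k | k dvd n div e. ?\<mu> k * g e)"
    by (rule sum_divisors_div_swap[OF assms(1)])
  also have "\<dots> = (\<Sum>e | e dvd n. if e = n then g e else 0)"
  proof (intro sum.cong refl)
    fix e assume "e \<in> {e. e dvd n}"
    then have "n div e > 0" "n div e = 1 \<longleftrightarrow> e = n"
      using assms(1) by (auto simp: dvd_div_eq_0_iff intro!: Nat.gr0I)
    then show "(\<Sum>k | k dvd n div e. ?\<mu> k * g e) = (if e = n then g e else 0)"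
      by (simp add: sum_moebius_mu_dvd flip: sum_distrib_right of_int_sum)
  qed
  also have "\<dots> = g n"
    using assms(1) by simp
  finally show ?thesis ..
qed

section \<open>Orbits of an iterated map\<close>

lemma card_orbit_eq_funpow_dist1:
  assumes "x \<in> orbit f x"
  shows "card (orbit f x) = funpow_dist1 f x x"
  unfolding orbit_conv_funpow_dist1[OF assms]
  using card_image[OF inj_on_funpow_dist1[OF assms]] by simp

lemma funpow_eq_self_iff_card_orbit_dvd:
  assumes "x \<in> orbit f x"
  shows "(f ^^ k) x = x \<longleftrightarrow> card (orbit f x) dvd k"
proof -
  define p where "p = funpow_dist1 f x x"
  have p: "(f ^^ p) x = x" "p > 0"
    using funpow_dist1_prop[OF assms] by (simp_all add: p_def)
  have "(f ^^ k) x = (f ^^ (k mod p)) x"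
    using funpow_mod_eq[OF p(1)] by simp
  moreover have "(f ^^ (k mod p)) x = x \<longleftrightarrow> k mod p = 0"
    using funpow_dist1_least[of "k mod p" f x x] p by (auto simp: p_def)
  ultimately show ?thesis
    using card_orbit_eq_funpow_dist1[OF assms] by (simp add: p_def dvd_eq_mod_eq_0)
qed

lemma orbit_eq_of_mem: "x \<in> orbit f x \<Longrightarrow> y \<in> orbit f x \<Longrightarrow> orbit f y = orbit f x"
  by (metis cyclic_on_singleI orbit_cyclic_eq3)

lemma orbit_subset_of_image_subset:
  assumes "f ` A \<subseteq> A" "x \<in> A"
  shows "orbit f x \<subseteq> A"
proof
  fix y assume "y \<in> orbit f x"
  then show "y \<in> A"
    using assms by (induction rule: orbit.induct) auto
qed

lemma orbit_of_mem_orbit_image: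
  assumes "f ` A \<subseteq> A" "\<And>x. x \<in> A \<Longrightarrow> x \<in> orbit f x" "C \<in> orbit f ` A" "x \<in> C"
  shows "orbit f x = C" "x \<in> A"
proof -
  obtain y where y: "y \<in> A" "C = orbit f y"
    using assms(3) by blast
  show "orbit f x = C"
    using orbit_eq_of_mem[OF assms(2)[OF y(1)]] assms(4) y(2) by simp
  show "x \<in> A"
    using orbit_subset_of_image_subset[OF assms(1) y(1)] assms(4) y(2) by blast
qed

lemma card_fixed_points_funpow:
  assumes "finite A" "\<And>x. x \<in> A \<Longrightarrow> x \<in> orbit f x" "k > 0"
  shows "card {x \<in> A. (f ^^ k) x = x} = (\<Sum>e | e dvd k. card {x \<in> A. card (orbit f x) = e})"
proof -
  have "{x \<in> A. (f ^^ k) x = x} = (\<Union>e\<in>{e. e dvd k}. {x \<in> A. card (orbit f x) = e})"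
    using assms(2) by (auto simp: funpow_eq_self_iff_card_orbit_dvd)
  also have "card \<dots> = (\<Sum>e | e dvd k. card {x \<in> A. card (orbit f x) = e})"
    using assms(1,3) by (intro card_UN_disjoint) auto
  finally show ?thesis .
qed

lemma card_points_of_orbit_size:
  assumes "finite A" "f ` A \<subseteq> A" "\<And>x. x \<in> A \<Longrightarrow> x \<in> orbit f x"
  shows "card {x \<in> A. card (orbit f x) = d} = d * card {C \<in> orbit f ` A. card C = d}"
proof -
  let ?Os = "{C \<in> orbit f ` A. card C = d}"
  note orbit_of_mem = orbit_of_mem_orbit_image[OF assms(2,3)]
  have "{x \<in> A. card (orbit f x) = d} = \<Union> ?Os"
  proof (intro equalityI subsetI)
    fix x assume "x \<in> {x \<in> A. card (orbit f x) = d}"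
    then have "orbit f x \<in> ?Os" "x \<in> orbit f x"
      using assms(3) by auto
    then show "x \<in> \<Union> ?Os" by blast
  next
    fix x assume "x \<in> \<Union> ?Os"
    then obtain C where "x \<in> C" "C \<in> orbit f ` A" "card C = d"
      by blast
    then show "x \<in> {x \<in> A. card (orbit f x) = d}"
      using orbit_of_mem[of C x] by simp
  qed
  moreover have "card (\<Union> ?Os) = sum card ?Os"
  proof (rule card_Union_disjoint)
    show "pairwise disjnt ?Os"
    proof (rule pairwiseI)
      fix C C' assume C: "C \<in> ?Os" and C': "C' \<in> ?Os" and "C \<noteq> C'"
      have "C = C'" if "z \<in> C" "z \<in> C'" for z
        using orbit_of_mem(1)[of C z] orbit_of_mem(1)[of C' z] C C' that by simp
      with \<open>C \<noteq> C'\<close> show "disjnt C C'"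
        by (auto simp: disjnt_def)
    qed
    show "finite C" if "C \<in> ?Os" for C
      using that assms(1) orbit_of_mem(2)[of C] finite_subset[of C A] by blast
  qed
  moreover have "sum card ?Os = d * card ?Os"
    by simp
  ultimately show ?thesis
    by simp
qed

section \<open>Counting maximal independent sets of a cycle\<close>

lemma MIS_subset: "X \<in> MIS n \<Longrightarrow> X \<subseteq> {..<n}"
  by (simp add: MIS_def)

lemma finite_MIS: "finite (MIS n)"
  by (rule finite_subset[of _ "Pow {..<n}"]) (auto simp: MIS_def)

type_synonym state = "bool \<times> bool"

text \<open>\<open>step (a, b) (b, c)\<close> says that the window \<open>a b c\<close> of three consecutive vertices violates
  neither independence nor maximality.\<close>

definition step :: "state \<Rightarrow> state \<Rightarrow> bool" where
  "step x y \<longleftrightarrow>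
     snd x = fst y \<and> \<not> (fst x \<and> snd x) \<and> \<not> (fst y \<and> snd y) \<and> (fst x \<or> snd x \<or> snd y)"

definition states :: "state set" where
  "states = {(True, False), (False, True), (False, False)}"

lemma step_imp_in_states: "step s t \<Longrightarrow> t \<in> states"
  by (cases t) (auto simp: step_def states_def)

definition walks :: "nat \<Rightarrow> state \<Rightarrow> state \<Rightarrow> state list set" where
  "walks n s t = {hs. length hs = Suc n \<and> hd hs = s \<and> last hs = t \<and> successively step hs}"

fun walk_count :: "nat \<Rightarrow> state \<Rightarrow> state \<Rightarrow> nat" where
  "walk_count 0 s t = (if s = t then 1 else 0)"
| "walk_count (Suc n) s t = (\<Sum>u\<in>states. if step s u then walk_count n u t else 0)"

lemma finite_walks: "finite (walks n s t)"
proof (rule finite_subset)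
  show "walks n s t \<subseteq> {hs. set hs \<subseteq> UNIV \<and> length hs = Suc n}"
    by (auto simp: walks_def)
qed (rule finite_lists_length_eq, simp)

lemma walks_0: "walks 0 s t = (if s = t then {[s]} else {})"
  by (auto simp: walks_def length_Suc_conv)

lemma walks_Suc: "walks (Suc n) s t = (\<Union>u\<in>{u\<in>states. step s u}. Cons s ` walks n u t)"
proof (intro set_eqI iffI)
  fix hs assume "hs \<in> walks (Suc n) s t"
  then obtain u hs' where "hs = s # u # hs'" "step s u" "u # hs' \<in> walks n u t"
    by (auto simp: walks_def length_Suc_conv)
  then show "hs \<in> (\<Union>u\<in>{u\<in>states. step s u}. Cons s ` walks n u t)"
    using step_imp_in_states by blast
next
  fix hs assume "hs \<in> (\<Union>u\<in>{u\<in>states. step s u}. Cons s ` walks n u t)"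
  then obtain u hs' where "step s u" "hs = s # hs'" "hs' \<in> walks n u t" by auto
  then show "hs \<in> walks (Suc n) s t"
    by (cases hs') (auto simp: walks_def)
qed

lemma card_walks: "card (walks n s t) = walk_count n s t"
proof (induction n arbitrary: s)
  case 0
  then show ?case by (simp add: walks_0)
next
  case (Suc n)
  have "card (walks (Suc n) s t) = (\<Sum>u\<in>{u\<in>states. step s u}. card (Cons s ` walks n u t))"
    unfolding walks_Suc
    by (intro card_UN_disjoint finite_imageI finite_walks ballI impI) (auto simp: states_def walks_def)
  also have "\<dots> = (\<Sum>u\<in>{u\<in>states. step s u}. walk_count n u t)"
    by (simp add: card_image Suc.IH)
  also have "\<dots> = walk_count (Suc n) s t"
    by (simp add: sum.inter_filter[symmetric])
  finally show ?case .
qed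

text \<open>\<open>walk_count n s t\<close> is the \<open>(s, t)\<close> entry of \<open>A\<^sup>n\<close> for the 0/1 matrix \<open>A\<close> of \<open>step\<close> on
  \<open>states\<close>, and \<open>A\<^sup>3 = A + 1\<close> is the Perrin recurrence.\<close>
lemma walk_count_Suc3:
  "s \<in> states \<Longrightarrow> walk_count (Suc (Suc (Suc n))) s t = walk_count (Suc n) s t + walk_count n s t"
  by (auto simp: states_def step_def)

lemma trace_walk_count_eq_perrin: "(\<Sum>s\<in>states. walk_count n s s) = perrin n"
proof (induction n rule: perrin.induct)
  case (4 n)
  have "(\<Sum>s\<in>states. walk_count (Suc (Suc (Suc n))) s s)
      = (\<Sum>s\<in>states. walk_count (Suc n) s s) + (\<Sum>s\<in>states. walk_count n s s)"
    by (simp only: walk_count_Suc3 sum.distrib cong: sum.cong)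
  with 4 show ?case by simp
qed (auto simp: states_def step_def)

definition closed_walks :: "nat \<Rightarrow> state list set" where
  "closed_walks n = {hs. length hs = Suc n \<and> hd hs = last hs \<and> successively step hs \<and> hd hs \<in> states}"

lemma card_closed_walks: "card (closed_walks n) = perrin n"
proof -
  have "closed_walks n = (\<Union>s\<in>states. walks n s s)"
    by (auto simp: closed_walks_def walks_def)
  also have "card \<dots> = (\<Sum>s\<in>states. card (walks n s s))"
    by (intro card_UN_disjoint finite_walks ballI impI) (auto simp: states_def walks_def)
  finally show ?thesis
    by (simp add: card_walks trace_walk_count_eq_perrin)
qed

definition maximal_independent_seq :: "(nat \<Rightarrow> bool) \<Rightarrow> bool" where
  "maximal_independent_seq b \<longleftrightarrow>
     (\<forall>i. \<not> (b i \<and> b (Suc i)) \<and> (b i \<or> b (Suc i) \<or> b (Suc (Suc i))))"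

lemma MIS_iff_maximal_independent_seq:
  assumes "n > 0"
  shows "X \<in> MIS n \<longleftrightarrow> X \<subseteq> {..<n} \<and> maximal_independent_seq (\<lambda>i. i mod n \<in> X)"
proof
  assume X: "X \<in> MIS n"
  have "\<not> (i mod n \<in> X \<and> Suc i mod n \<in> X) \<and>
      (i mod n \<in> X \<or> Suc i mod n \<in> X \<or> Suc (Suc i) mod n \<in> X)" for i
  proof -
    have "i mod n < n" "Suc (i mod n) mod n = Suc i mod n"
      "Suc (Suc (i mod n)) mod n = Suc (Suc i) mod n"
      using assms by (simp_all add: mod_Suc_eq mod_Suc_Suc_eq)
    then show ?thesis
      using X unfolding MIS_def by (metis (no_types, lifting) Suc_eq_plus1 add_2_eq_Suc' mem_Collect_eq)
  qed
  then show "X \<subseteq> {..<n} \<and> maximal_independent_seq (\<lambda>i. i mod n \<in> X)"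
    using X by (simp add: MIS_def maximal_independent_seq_def)
next
  assume X: "X \<subseteq> {..<n} \<and> maximal_independent_seq (\<lambda>i. i mod n \<in> X)"
  have "\<not> (i \<in> X \<and> (i + 1) mod n \<in> X) \<and> (i \<in> X \<or> (i + 1) mod n \<in> X \<or> (i + 2) mod n \<in> X)"
    if "i < n" for i
  proof -
    have "\<not> (i mod n \<in> X \<and> Suc i mod n \<in> X) \<and>
        (i mod n \<in> X \<or> Suc i mod n \<in> X \<or> Suc (Suc i) mod n \<in> X)"
      using X by (simp add: maximal_independent_seq_def)
    with that show ?thesis by simp
  qed
  then show "X \<in> MIS n"
    using X by (auto simp: MIS_def)
qed

definition walk_of_set :: "nat \<Rightarrow> nat set \<Rightarrow> state list" where
  "walk_of_set n X = map (\<lambda>i. (i mod n \<in> X, Suc i mod n \<in> X)) [0..<Suc n]"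

definition set_of_walk :: "nat \<Rightarrow> state list \<Rightarrow> nat set" where
  "set_of_walk n hs = {i. i < n \<and> fst (hs ! i)}"

lemma length_walk_of_set [simp]: "length (walk_of_set n X) = Suc n"
  by (simp add: walk_of_set_def)

lemma nth_walk_of_set: "i \<le> n \<Longrightarrow> walk_of_set n X ! i = (i mod n \<in> X, Suc i mod n \<in> X)"
  unfolding walk_of_set_def by (simp del: upt_Suc add: nth_map_upt)

lemma closed_walk_nth_mod:
  assumes "n > 0" "hs \<in> closed_walks n" "i \<le> n"
  shows "hs ! (i mod n) = hs ! i"
proof (cases "i = n")
  case True
  have "length hs = Suc n" "hd hs = last hs"
    using assms(2) by (auto simp: closed_walks_def)
  then have "hs ! n = hs ! 0"
    by (metis diff_Suc_1 hd_conv_nth last_conv_nth list.size(3) nat.distinct(1))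
  with True show ?thesis by simp
qed (use assms in simp)

lemma closed_walk_step_mod:
  assumes "n > 0" "hs \<in> closed_walks n"
  shows "step (hs ! (i mod n)) (hs ! (Suc i mod n))"
proof -
  have "successively step hs" "length hs = Suc n"
    using assms(2) by (simp_all add: closed_walks_def)
  then have "step (hs ! (i mod n)) (hs ! Suc (i mod n))"
    using assms(1) by (simp add: successively_conv_nth)
  moreover have "hs ! Suc (i mod n) = hs ! (Suc i mod n)"
    using closed_walk_nth_mod[OF assms, of "Suc (i mod n)"] assms(1)
    by (simp add: Suc_leI mod_Suc_eq)
  ultimately show ?thesis by simp
qed

lemma closed_walk_nth_mod_eq:
  assumes "n > 0" "hs \<in> closed_walks n"
  shows "hs ! (i mod n) = (i mod n \<in> set_of_walk n hs, Suc i mod n \<in> set_of_walk n hs)"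
  using closed_walk_step_mod[OF assms, of i] assms(1)
  by (simp add: set_of_walk_def step_def prod_eq_iff)

lemma walk_of_set_in_closed_walks:
  assumes "n > 0" "X \<in> MIS n"
  shows "walk_of_set n X \<in> closed_walks n"
proof -
  let ?hs = "walk_of_set n X"
  have "maximal_independent_seq (\<lambda>i. i mod n \<in> X)"
    using assms MIS_iff_maximal_independent_seq by blast
  note mis = this[unfolded maximal_independent_seq_def, rule_format]
  have "step (?hs ! i) (?hs ! Suc i)" if "i < n" for i
    using mis[of i] mis[of "Suc i"] that by (simp add: nth_walk_of_set step_def)
  then have "successively step ?hs"
    by (simp add: successively_conv_nth)
  moreover have "?hs ! 0 \<in> states"
    using mis[of 0] by (auto simp: nth_walk_of_set states_def)
  moreover have "?hs ! n = ?hs ! 0"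
    using assms(1) by (simp add: nth_walk_of_set mod_Suc_eq[of n n, symmetric])
  moreover have "?hs \<noteq> []"
    by (simp add: walk_of_set_def)
  ultimately show ?thesis
    by (simp add: closed_walks_def hd_conv_nth last_conv_nth)
qed

lemma set_of_walk_in_MIS:
  assumes "n > 0" "hs \<in> closed_walks n"
  shows "set_of_walk n hs \<in> MIS n"
proof -
  let ?X = "set_of_walk n hs"
  have "step (i mod n \<in> ?X, Suc i mod n \<in> ?X) (Suc i mod n \<in> ?X, Suc (Suc i) mod n \<in> ?X)" for i
    using closed_walk_step_mod[OF assms, of i] closed_walk_nth_mod_eq[OF assms] by simp
  then have "maximal_independent_seq (\<lambda>i. i mod n \<in> ?X)"
    by (simp add: maximal_independent_seq_def step_def)
  moreover have "?X \<subseteq> {..<n}" by (auto simp: set_of_walk_def)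
  ultimately show ?thesis
    using MIS_iff_maximal_independent_seq[OF assms(1)] by blast
qed

lemma bij_betw_walk_of_set:
  assumes "n > 0"
  shows "bij_betw (walk_of_set n) (MIS n) (closed_walks n)"
proof (rule bij_betw_byWitness[where f' = "set_of_walk n"])
  show "\<forall>X\<in>MIS n. set_of_walk n (walk_of_set n X) = X"
    by (auto simp: MIS_def set_of_walk_def nth_walk_of_set)
  show "\<forall>hs\<in>closed_walks n. walk_of_set n (set_of_walk n hs) = hs"
  proof
    fix hs assume hs: "hs \<in> closed_walks n"
    show "walk_of_set n (set_of_walk n hs) = hs"
    proof (rule nth_equalityI)
      show "length (walk_of_set n (set_of_walk n hs)) = length hs"
        using hs by (simp add: closed_walks_def)
      fix i assume "i < length (walk_of_set n (set_of_walk n hs))"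
      then have "i \<le> n" by simp
      then show "walk_of_set n (set_of_walk n hs) ! i = hs ! i"
        using closed_walk_nth_mod_eq[OF assms hs] closed_walk_nth_mod[OF assms hs]
        by (simp add: nth_walk_of_set)
    qed
  qed
qed (use assms walk_of_set_in_closed_walks set_of_walk_in_MIS in blast)+

lemma card_MIS: "n > 0 \<Longrightarrow> card (MIS n) = perrin n"
  using bij_betw_same_card[OF bij_betw_walk_of_set] card_closed_walks by simp

section \<open>Rotations of the cycle\<close>

lemma Suc_mod_eq_Suc_mod_iff: "Suc a mod n = Suc b mod n \<longleftrightarrow> a mod n = b mod n"
  by (simp add: mod_eq_iff_dvd_symdiff_nat)

lemma mod_add_complement_eq:
  fixes j n k :: nat
  assumes "j < n"
  shows "(j + (n - k mod n) + k) mod n = j"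
proof -
  have "n * (k div n) + k mod n = k" "k mod n < n"
    using assms by simp_all
  then have "j + (n - k mod n) + k = j + n * (k div n) + n"
    by linarith
  with assms show ?thesis by simp
qed

lemma subset_lessThan_eqI:
  fixes n k :: nat
  assumes "A \<subseteq> {..<n}" "B \<subseteq> {..<n}" "\<And>i. (i + k) mod n \<in> A \<longleftrightarrow> (i + k) mod n \<in> B"
  shows "A = B"
proof (intro set_eqI)
  fix j
  show "j \<in> A \<longleftrightarrow> j \<in> B"
  proof (cases "j < n")
    case True
    then show ?thesis
      using assms(3)[of "j + (n - k mod n)"] mod_add_complement_eq[OF True, of k] by simp
  next
    case False
    then show ?thesis
      using assms(1,2) by auto
  qed
qed

lemma sigma_subset: "X \<subseteq> {..<n} \<Longrightarrow> sigma n X \<subseteq> {..<n}"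
  by (auto simp: sigma_def)

lemma funpow_sigma_subset: "X \<subseteq> {..<n} \<Longrightarrow> (sigma n ^^ k) X \<subseteq> {..<n}"
  by (induction k) (simp_all add: sigma_subset)

lemma Suc_mod_mem_sigma_iff:
  assumes "X \<subseteq> {..<n}"
  shows "Suc i mod n \<in> sigma n X \<longleftrightarrow> i mod n \<in> X"
proof -
  have "Suc i mod n \<in> sigma n X \<longleftrightarrow> (\<exists>x\<in>X. Suc i mod n = Suc x mod n)"
    by (auto simp: sigma_def)
  also have "\<dots> \<longleftrightarrow> (\<exists>x\<in>X. i mod n = x)"
    using assms by (auto simp: Suc_mod_eq_Suc_mod_iff subset_iff)
  finally show ?thesis by simp
qed

lemma add_mod_mem_funpow_sigma_iff:
  assumes "X \<subseteq> {..<n}"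
  shows "(i + k) mod n \<in> (sigma n ^^ k) X \<longleftrightarrow> i mod n \<in> X"
proof (induction k)
  case (Suc k)
  then show ?case
    using Suc_mod_mem_sigma_iff[OF funpow_sigma_subset[OF assms], of "i + k" k] by simp
qed simp

lemma funpow_sigma_self: "X \<subseteq> {..<n} \<Longrightarrow> (sigma n ^^ n) X = X"
  by (rule subset_lessThan_eqI[where k = n])
    (use add_mod_mem_funpow_sigma_iff[of X n _ n] funpow_sigma_subset in auto)

lemma maximal_independent_seq_shift:
  "maximal_independent_seq b \<Longrightarrow> maximal_independent_seq (\<lambda>i. b (i + k))"
  by (simp add: maximal_independent_seq_def)

lemma sigma_MIS:
  assumes "n > 0" "X \<in> MIS n"
  shows "sigma n X \<in> MIS n"
proof -
  have X: "X \<subseteq> {..<n}" "maximal_independent_seq (\<lambda>i. i mod n \<in> X)"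
    using assms MIS_iff_maximal_independent_seq by blast+
  have "j mod n \<in> sigma n X \<longleftrightarrow> (j + (n - 1)) mod n \<in> X" for j
    using Suc_mod_mem_sigma_iff[OF X(1), of "j + (n - 1)"] assms(1) by simp
  then have "maximal_independent_seq (\<lambda>j. j mod n \<in> sigma n X)"
    using maximal_independent_seq_shift[OF X(2), of "n - 1"] by simp
  then show ?thesis
    using MIS_iff_maximal_independent_seq[OF assms(1)] sigma_subset[OF X(1)] by blast
qed

definition repeat_set :: "nat \<Rightarrow> nat \<Rightarrow> nat set \<Rightarrow> nat set" where
  "repeat_set n d Y = {i. i < n \<and> i mod d \<in> Y}"

lemma repeat_set_subset: "repeat_set n d Y \<subseteq> {..<n}"
  by (auto simp: repeat_set_def)

lemma mod_mem_repeat_set_iff: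
  "d dvd n \<Longrightarrow> n > 0 \<Longrightarrow> j mod n \<in> repeat_set n d Y \<longleftrightarrow> j mod d \<in> Y"
  by (simp add: repeat_set_def mod_mod_cancel)

lemma repeat_set_MIS_iff:
  assumes "d dvd n" "n > 0" "Y \<subseteq> {..<d}"
  shows "repeat_set n d Y \<in> MIS n \<longleftrightarrow> Y \<in> MIS d"
proof -
  have "d > 0" using assms by (simp add: dvd_pos_nat)
  then show ?thesis
    using assms by (simp add: MIS_iff_maximal_independent_seq mod_mem_repeat_set_iff)
      (auto simp: repeat_set_def)
qed

lemma repeat_set_inter_lessThan: "d \<le> n \<Longrightarrow> Y \<subseteq> {..<d} \<Longrightarrow> repeat_set n d Y \<inter> {..<d} = Y"
  by (auto simp: repeat_set_def subset_iff)

lemma funpow_sigma_repeat_set: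
  assumes "d dvd n" "n > 0"
  shows "(sigma n ^^ d) (repeat_set n d Y) = repeat_set n d Y"
proof (rule subset_lessThan_eqI[where k = d])
  fix i
  have "(i + d) mod n \<in> (sigma n ^^ d) (repeat_set n d Y) \<longleftrightarrow> i mod n \<in> repeat_set n d Y"
    by (rule add_mod_mem_funpow_sigma_iff[OF repeat_set_subset])
  also have "\<dots> \<longleftrightarrow> i mod d \<in> Y"
    using assms by (simp add: mod_mem_repeat_set_iff)
  also have "\<dots> \<longleftrightarrow> (i + d) mod n \<in> repeat_set n d Y"
    using assms by (simp add: mod_mem_repeat_set_iff)
  finally show "(i + d) mod n \<in> (sigma n ^^ d) (repeat_set n d Y) \<longleftrightarrow> (i + d) mod n \<in> repeat_set n d Y" .
qed (simp_all add: funpow_sigma_subset repeat_set_subset)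

lemma repeat_set_restrict:
  assumes "d dvd n" "n > 0" "X \<subseteq> {..<n}" "(sigma n ^^ d) X = X"
  shows "repeat_set n d (X \<inter> {..<d}) = X"
proof -
  have periodic: "(i + d * m) mod n \<in> X \<longleftrightarrow> i mod n \<in> X" for i m
  proof (induction m)
    case (Suc m)
    then show ?case
      using add_mod_mem_funpow_sigma_iff[OF assms(3), of "i + d * m" d] assms(4)
      by (simp add: algebra_simps)
  qed simp
  have "d > 0" "d \<le> n"
    using assms by (simp_all add: dvd_pos_nat dvd_imp_le)
  then have "j mod d < n" for j
    using mod_less_divisor[of d j] by linarith
  then have mod_d: "j mod n \<in> X \<longleftrightarrow> j mod d \<in> X" for j
    using periodic[of "j mod d" "j div d"] by simp
  show ?thesis
  proof (rule set_eqI)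
    fix i
    show "i \<in> repeat_set n d (X \<inter> {..<d}) \<longleftrightarrow> i \<in> X"
      using mod_d[of i] assms(3) \<open>d > 0\<close> by (cases "i < n") (auto simp: repeat_set_def)
  qed
qed

lemma bij_betw_repeat_set:
  assumes "d dvd n" "n > 0"
  shows "bij_betw (repeat_set n d) (MIS d) {X \<in> MIS n. (sigma n ^^ d) X = X}"
proof (rule bij_betw_byWitness[where f' = "\<lambda>X. X \<inter> {..<d}"])
  have "d \<le> n"
    using assms by (simp add: dvd_imp_le)
  then show "\<forall>Y\<in>MIS d. repeat_set n d Y \<inter> {..<d} = Y"
    by (simp add: repeat_set_inter_lessThan MIS_subset)
  show "\<forall>X\<in>{X \<in> MIS n. (sigma n ^^ d) X = X}. repeat_set n d (X \<inter> {..<d}) = X"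
    using assms by (simp add: repeat_set_restrict MIS_subset)
  show "repeat_set n d ` MIS d \<subseteq> {X \<in> MIS n. (sigma n ^^ d) X = X}"
    using assms by (auto simp: repeat_set_MIS_iff funpow_sigma_repeat_set MIS_subset)
  show "(\<lambda>X. X \<inter> {..<d}) ` {X \<in> MIS n. (sigma n ^^ d) X = X} \<subseteq> MIS d"
  proof clarify
    fix X assume X: "X \<in> MIS n" "(sigma n ^^ d) X = X"
    then have "repeat_set n d (X \<inter> {..<d}) \<in> MIS n"
      using assms by (simp add: repeat_set_restrict MIS_subset)
    then show "X \<inter> {..<d} \<in> MIS d"
      using assms by (simp add: repeat_set_MIS_iff)
  qed
qed

lemma card_fixed_points_funpow_sigma:
  assumes "d dvd n" "n > 0"
  shows "card {X \<in> MIS n. (sigma n ^^ d) X = X} = perrin d"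
  using bij_betw_same_card[OF bij_betw_repeat_set[OF assms]] card_MIS[of d] assms
  by (simp add: dvd_pos_nat)

section \<open>Orbits of maximal independent sets\<close>

lemma self_mem_orbit_sigma:
  assumes "n > 0" "X \<subseteq> {..<n}"
  shows "X \<in> orbit (sigma n) X"
  using funpow_sigma_self[OF assms(2)] assms(1) by (auto simp: orbit_altdef)

lemma orbit_sigma_eq_orbit:
  assumes "n > 0" "X \<subseteq> {..<n}"
  shows "orbit_sigma n X = orbit (sigma n) X"
  using orbit_altdef_bounded[OF funpow_sigma_self[OF assms(2)] assms(1)]
  by (simp add: orbit_sigma_def)

lemma card_MIS_of_orbit_size:
  assumes "n > 0"
  shows "card {X \<in> MIS n. card (orbit (sigma n) X) = d} = d * card {C \<in> orbit_sigma n ` MIS n. card C = d}"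
proof -
  have "orbit_sigma n ` MIS n = orbit (sigma n) ` MIS n"
    using orbit_sigma_eq_orbit[OF assms] MIS_subset by (intro image_cong) simp_all
  moreover have "sigma n ` MIS n \<subseteq> MIS n"
    using sigma_MIS[OF assms] by blast
  ultimately show ?thesis
    using card_points_of_orbit_size[OF finite_MIS, of "sigma n"]
      self_mem_orbit_sigma[OF assms] MIS_subset by simp
qed

lemma card_MIS_of_orbit_size_moebius:
  assumes "d dvd n" "n > 0"
  shows "real (card {X \<in> MIS n. card (orbit (sigma n) X) = d})
    = (\<Sum>e | e dvd d. real (perrin e) * of_int (moebius_mu (d div e)))"
proof (rule moebius_inversion[where f = "\<lambda>m. real (perrin m)"
      and g = "\<lambda>e. real (card {X \<in> MIS n. card (orbit (sigma n) X) = e})"])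
  show "d > 0"
    using assms by (simp add: dvd_pos_nat)
next
  fix m assume "m dvd d"
  then have m: "m dvd n" "m > 0"
    using assms dvd_trans dvd_pos_nat by blast+
  have "perrin m = card {X \<in> MIS n. (sigma n ^^ m) X = X}"
    using card_fixed_points_funpow_sigma[OF m(1) assms(2)] by simp
  also have "\<dots> = (\<Sum>e | e dvd m. card {X \<in> MIS n. card (orbit (sigma n) X) = e})"
    using self_mem_orbit_sigma[OF assms(2)] MIS_subset
    by (intro card_fixed_points_funpow[OF finite_MIS _ m(2)]) blast
  finally show "real (perrin m) = (\<Sum>e | e dvd m. real (card {X \<in> MIS n. card (orbit (sigma n) X) = e}))"
    by simp
qed

lemma card_orbits_of_size_eq_orb_d:
  assumes "d dvd n" "n > 0"
  shows "card {C \<in> orbit_sigma n ` MIS n. card C = d} = orb_d 1 d"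
proof -
  have "d > 0"
    using assms by (simp add: dvd_pos_nat)
  have "real (d * card {C \<in> orbit_sigma n ` MIS n. card C = d})
      = real (d * card {C \<in> orbit_sigma d ` MIS d. card C = d})"
    using card_MIS_of_orbit_size_moebius[OF assms] card_MIS_of_orbit_size_moebius[OF dvd_refl \<open>d > 0\<close>]
    by (simp only: card_MIS_of_orbit_size assms(2) \<open>d > 0\<close> flip: of_nat_mult)
  then show ?thesis
    using \<open>d > 0\<close> by (simp add: orb_d_def)
qed

lemma orb_eq_sum_card_orbits_of_size:
  assumes "n > 0"
  shows "orb n = (\<Sum>d | d dvd n. card {C \<in> orbit_sigma n ` MIS n. card C = d})"
proof -
  have "card C dvd n" if C: "C \<in> orbit_sigma n ` MIS n" for C
  proof -
    obtain X where "X \<in> MIS n" and X: "C = orbit_sigma n X"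
      using C by blast
    from \<open>X \<in> MIS n\<close> have "X \<subseteq> {..<n}"
      by (rule MIS_subset)
    then show ?thesis
      using funpow_eq_self_iff_card_orbit_dvd[OF self_mem_orbit_sigma[OF assms], of X n]
        funpow_sigma_self[of X n] orbit_sigma_eq_orbit[OF assms, of X] X by simp
  qed
  then have "orbit_sigma n ` MIS n = (\<Union>d\<in>{d. d dvd n}. {C \<in> orbit_sigma n ` MIS n. card C = d})"
    by blast
  then have "orb n = card (\<Union>d\<in>{d. d dvd n}. {C \<in> orbit_sigma n ` MIS n. card C = d})"
    unfolding orb_def by (rule arg_cong)
  also have "\<dots> = (\<Sum>d | d dvd n. card {C \<in> orbit_sigma n ` MIS n. card C = d})"
    using assms by (intro card_UN_disjoint) (auto simp: finite_MIS)
  finally show ?thesis .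
qed

theorem theorem4p1:
  fixes n :: nat
  assumes "n \<ge> 1"
  shows "orb n = (\<Sum>d | d dvd n. orb_d 1 d) \<and>
    real (orb_d 1 n) = (\<Sum>d | d dvd n. real (perrin d) * real_of_int (moebius_mu (n div d))) / real n"
proof
  have n: "n > 0"
    using assms by simp
  show "orb n = (\<Sum>d | d dvd n. orb_d 1 d)"
    unfolding orb_eq_sum_card_orbits_of_size[OF n]
    using card_orbits_of_size_eq_orb_d[OF _ n] by (intro sum.cong) simp_all
  have "real n * real (orb_d 1 n) = real (card {X \<in> MIS n. card (orbit (sigma n) X) = n})"
    using card_MIS_of_orbit_size[OF n, of n] card_orbits_of_size_eq_orb_d[OF dvd_refl n] by simp
  also have "\<dots> = (\<Sum>d | d dvd n. real (perrin d) * real_of_int (moebius_mu (n div d)))"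
    by (rule card_MIS_of_orbit_size_moebius[OF dvd_refl n])
  finally show "real (orb_d 1 n) = (\<Sum>d | d dvd n. real (perrin d) * real_of_int (moebius_mu (n div d))) / real n"
    using n by (simp add: eq_divide_eq mult.commute)
qed

end
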